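(* Let $V$ and $W$ be Banach spaces, let $\mathcal A\subset\mathcal L(V,W)$ be bounded and let $T\in\mathcal L(W,V)$ be compact. Set $\mathcal B:=\{I+T\circ A: A\in\mathcal A\}$. Assume that each $B\in\mathcal B$ is an isomorphism of $V$ and that $\mathcal A$ is sequentially compact in the weak operator topology of $\mathcal L(V,W)$. Then $\sup_{B\in\mathcal B}\|B^{-1}\|_{\mathcal L(V)}<+\infty$. In particular, there exists $\kappa>0$ such that $\inf_{B\in\mathcal B}\mathfrak C(B)\ge\kappa$.
   Context: The weak operator topology on $\mathcal L(V,W)$ is the coarsest topology making all maps $A\mapsto\langle h,Av\rangle_{W',W}$ ($v\in V$, $h\in W'$) continuous; sequential compactness of $\mathcal A$ means every sequence in $\mathcal A$ has a subsequence $A_n$ and some $A\in\mathcal A$ with $\langle h,A_nv\rangle\to\langle h,Av\rangle$ for all $v\in V,h\in W'$. For $B\in\mathcal L(V)$, the Banach constant $\mathfrak C(B)$ is the supremum of all $\kappa>0$ with $B_V(0,\kappa)\subset B(B_V(0,1))$ (closed balls) if $B$ is surjective, and $0$ otherwise. *)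

theory Defs
  imports "HOL-Analysis.Analysis"
begin

definition compact_operator :: "('a::real_normed_vector \<Rightarrow>\<^sub>L 'b::real_normed_vector) \<Rightarrow> bool" where
  "compact_operator T \<longleftrightarrow> compact (closure (blinfun_apply T ` cball 0 1))"

definition wot_seq_compact :: "('a::real_normed_vector \<Rightarrow>\<^sub>L 'b::real_normed_vector) set \<Rightarrow> bool" where
  "wot_seq_compact \<A> \<longleftrightarrow>
     (\<forall>f::nat \<Rightarrow> ('a \<Rightarrow>\<^sub>L 'b). (\<forall>n. f n \<in> \<A>) \<longrightarrow>
        (\<exists>r A. strict_mono r \<and> A \<in> \<A> \<and>
           (\<forall>(v::'a) (h::'b \<Rightarrow>\<^sub>L real).
              (\<lambda>n. blinfun_apply h (blinfun_apply (f (r n)) v)) \<longlonglongrightarrow> blinfun_apply h (blinfun_apply A v))))"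

definition is_isomorphism :: "('a::real_normed_vector \<Rightarrow>\<^sub>L 'a) \<Rightarrow> bool" where
  "is_isomorphism B \<longleftrightarrow> (\<exists>C. C o\<^sub>L B = id_blinfun \<and> B o\<^sub>L C = id_blinfun)"

text \<open>Banach constant (extended-real valued, so that it may be +infinity).\<close>
definition banach_const :: "('a::real_normed_vector \<Rightarrow>\<^sub>L 'a) \<Rightarrow> ereal" where
  "banach_const B = (if surj (blinfun_apply B)
      then Sup (ereal ` {\<kappa>::real. \<kappa> > 0 \<and> cball 0 \<kappa> \<subseteq> blinfun_apply B ` cball 0 1})
      else 0)"

end

theory Submission
  imports Defs
begin

text \<open>If the inverses were unbounded, there would be unit vectors \<open>x\<^sub>n\<close> and operators
  \<open>A\<^sub>n \<in> \<A>\<close> with \<open>x\<^sub>n + T A\<^sub>n x\<^sub>n \<rightarrow> 0\<close>. Compactness of \<open>T\<close> lets \<open>T A\<^sub>n x\<^sub>n\<close> converge along a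
  subsequence, so \<open>x\<^sub>n \<rightarrow> w\<close> with \<open>\<parallel>w\<parallel> = 1\<close>, and along a further subsequence \<open>A\<^sub>n \<rightarrow> A\<^sub>0 \<in> \<A>\<close> in
  the weak operator topology. Since the \<open>A\<^sub>n\<close> are uniformly bounded, \<open>\<phi> (T A\<^sub>n x\<^sub>n) \<rightarrow> \<phi> (T A\<^sub>0 w)\<close>
  for every \<open>\<phi> \<in> V'\<close>, hence \<open>w + T A\<^sub>0 w = 0\<close> because the dual separates points, contradicting the
  injectivity of \<open>I + T A\<^sub>0\<close>. An operator with a right inverse \<open>C\<close> maps the unit ball onto a
  ball of radius \<open>1 / \<parallel>C\<parallel>\<close>, which bounds the Banach constant.

  That the dual separates points (Hahn-Banach) is proved with Zorn's lemma: below every sublinear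
  functional lies a minimal one, and a minimal sublinear functional \<open>q\<close> is linear, since it can
  be lowered to \<open>y \<mapsto> inf\<^sub>t\<^sub>\<ge>\<^sub>0 q (y + t x) - t q x\<close>, which is sublinear and sends \<open>-x\<close> to at
  most \<open>-q x\<close>. Starting below \<open>y \<mapsto> inf\<^sub>t\<^sub>\<ge>\<^sub>0 \<parallel>y + t u\<parallel> - t \<parallel>u\<parallel>\<close> yields a functional of
  norm at most one with value \<open>\<parallel>u\<parallel>\<close> at \<open>u\<close>.\<close>

definition sublinear :: "('a::real_vector \<Rightarrow> real) \<Rightarrow> bool" where
  "sublinear q \<longleftrightarrow> (\<forall>x y. q (x + y) \<le> q x + q y) \<and> (\<forall>c x. 0 \<le> c \<longrightarrow> q (c *\<^sub>R x) = c * q x)"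

lemma sublinear_add: "sublinear q \<Longrightarrow> q (x + y) \<le> q x + q y"
  unfolding sublinear_def by blast

lemma sublinear_scaleR: "sublinear q \<Longrightarrow> 0 \<le> c \<Longrightarrow> q (c *\<^sub>R x) = c * q x"
  unfolding sublinear_def by blast

lemma sublinear_zero: "sublinear q \<Longrightarrow> q 0 = 0"
  using sublinear_scaleR[of q 0 0] by simp

lemma sublinear_neg_le: "sublinear q \<Longrightarrow> - q (- x) \<le> q x"
  using sublinear_add[of q x "- x"] sublinear_zero[of q] by simp

lemma sublinearI:
  assumes add: "\<And>x y. q (x + y) \<le> q x + q y" and zero: "q 0 = 0"
    and scale: "\<And>c x. 0 < c \<Longrightarrow> q (c *\<^sub>R x) \<le> c * q x"
  shows "sublinear q"
proof -
  have "q (c *\<^sub>R x) = c * q x" if "0 < c" for c x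
  proof (rule antisym)
    show "q (c *\<^sub>R x) \<le> c * q x" using scale that .
    have "q x = q (inverse c *\<^sub>R (c *\<^sub>R x))" using that by simp
    also have "\<dots> \<le> inverse c * q (c *\<^sub>R x)" by (rule scale) (use that in simp)
    finally show "c * q x \<le> q (c *\<^sub>R x)" using that by (simp add: field_simps)
  qed
  then have "q (c *\<^sub>R x) = c * q x" if "0 \<le> c" for c x
    using that zero by (cases "c = 0") auto
  then show ?thesis unfolding sublinear_def using add by blast
qed

lemma sublinear_norm: "sublinear norm"
  unfolding sublinear_def by (simp add: norm_triangle_ineq)

definition inf_along :: "('a::real_vector \<Rightarrow> real) \<Rightarrow> 'a \<Rightarrow> 'a \<Rightarrow> real" where
  "inf_along q x y = (INF t\<in>{0..}. q (y + t *\<^sub>R x) - t * q x)"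

lemma bdd_below_inf_along:
  assumes "sublinear q"
  shows "bdd_below ((\<lambda>t. q (y + t *\<^sub>R x) - t * q x) ` {0..})"
proof (rule bdd_belowI2)
  fix t :: real assume "t \<in> {0..}"
  then have "q (t *\<^sub>R x) = t * q x" using sublinear_scaleR[OF assms] by simp
  moreover have "q ((y + t *\<^sub>R x) + - y) \<le> q (y + t *\<^sub>R x) + q (- y)"
    using sublinear_add[OF assms] .
  ultimately show "- q (- y) \<le> q (y + t *\<^sub>R x) - t * q x" by simp
qed

lemma inf_along_le:
  "sublinear q \<Longrightarrow> 0 \<le> t \<Longrightarrow> inf_along q x y \<le> q (y + t *\<^sub>R x) - t * q x"
  unfolding inf_along_def by (rule cINF_lower[OF bdd_below_inf_along]) auto

lemma inf_along_greatest:
  "(\<And>t. 0 \<le> t \<Longrightarrow> b \<le> q (y + t *\<^sub>R x) - t * q x) \<Longrightarrow> b \<le> inf_along q x y"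
  unfolding inf_along_def by (rule cINF_greatest) auto

lemma inf_along_le_self: "sublinear q \<Longrightarrow> inf_along q x \<le> q"
  using inf_along_le[of q 0] by (simp add: le_fun_def)

lemma inf_along_neg: "sublinear q \<Longrightarrow> inf_along q x (- x) \<le> - q x"
  using inf_along_le[of q 1 x "- x"] sublinear_zero[of q] by simp

lemma sublinear_inf_along:
  assumes q: "sublinear q"
  shows "sublinear (inf_along q x)"
proof (rule sublinearI)
  fix y1 y2
  have "inf_along q x (y1 + y2) - (q (y2 + s *\<^sub>R x) - s * q x) \<le> q (y1 + t *\<^sub>R x) - t * q x"
    if "0 \<le> t" "0 \<le> s" for s t
  proof -
    have "inf_along q x (y1 + y2) \<le> q ((y1 + t *\<^sub>R x) + (y2 + s *\<^sub>R x)) - (t + s) * q x"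
      using inf_along_le[OF q, of "t + s" x "y1 + y2"] that by (simp add: algebra_simps)
    also have "\<dots> \<le> q (y1 + t *\<^sub>R x) + q (y2 + s *\<^sub>R x) - (t + s) * q x"
      using sublinear_add[OF q] by simp
    finally show ?thesis by (simp add: algebra_simps)
  qed
  then have "inf_along q x (y1 + y2) - (q (y2 + s *\<^sub>R x) - s * q x) \<le> inf_along q x y1"
    if "0 \<le> s" for s
    using that by (intro inf_along_greatest) auto
  then have "inf_along q x (y1 + y2) - inf_along q x y1 \<le> inf_along q x y2"
    by (intro inf_along_greatest) (auto simp: algebra_simps)
  then show "inf_along q x (y1 + y2) \<le> inf_along q x y1 + inf_along q x y2" by simp
next
  show "inf_along q x 0 = 0"
  proof (rule antisym)
    show "inf_along q x 0 \<le> 0"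
      using inf_along_le_self[OF q] sublinear_zero[OF q] by (metis le_funD)
    show "0 \<le> inf_along q x 0"
      by (rule inf_along_greatest) (simp add: sublinear_scaleR[OF q])
  qed
next
  fix c :: real and y
  assume c: "0 < c"
  have "inf_along q x (c *\<^sub>R y) / c \<le> inf_along q x y"
  proof (rule inf_along_greatest)
    fix t :: real assume t: "0 \<le> t"
    have "c *\<^sub>R y + (c * t) *\<^sub>R x = c *\<^sub>R (y + t *\<^sub>R x)"
      by (simp add: scaleR_add_right)
    then have "inf_along q x (c *\<^sub>R y) \<le> q (c *\<^sub>R (y + t *\<^sub>R x)) - (c * t) * q x"
      using inf_along_le[OF q, of "c * t" x "c *\<^sub>R y"] t c by simp
    also have "\<dots> = c * (q (y + t *\<^sub>R x) - t * q x)"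
      using sublinear_scaleR[OF q] c by (simp add: right_diff_distrib)
    finally show "inf_along q x (c *\<^sub>R y) / c \<le> q (y + t *\<^sub>R x) - t * q x"
      using c by (simp add: field_simps)
  qed
  then show "inf_along q x (c *\<^sub>R y) \<le> c * inf_along q x y"
    using c by (simp add: field_simps)
qed

lemma sublinear_INF_chain:
  assumes ne: "C \<noteq> {}" and sub: "\<And>q. q \<in> C \<Longrightarrow> sublinear q"
    and bdd: "\<And>x. bdd_below ((\<lambda>q. q x) ` C)"
    and chain: "\<And>p q. p \<in> C \<Longrightarrow> q \<in> C \<Longrightarrow> p \<le> q \<or> q \<le> p"
  shows "sublinear (\<lambda>x. INF q\<in>C. q x)" (is "sublinear ?m")
proof -
  have lower: "?m x \<le> q x" if "q \<in> C" for q x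
    using bdd that by (rule cINF_lower)
  have greatest: "b \<le> ?m x" if "\<And>q. q \<in> C \<Longrightarrow> b \<le> q x" for b x
    using ne that by (rule cINF_greatest)
  show ?thesis
  proof (rule sublinearI)
    fix x y
    have "?m (x + y) \<le> p x + q y" if pq: "p \<in> C" "q \<in> C" for p q
    proof -
      obtain r where "r \<in> C" "r \<le> p" "r \<le> q"
        using chain[OF pq] pq by auto
      then have "?m (x + y) \<le> r x + r y"
        using lower sublinear_add[OF sub] by (meson order_trans)
      also have "\<dots> \<le> p x + q y" using \<open>r \<le> p\<close> \<open>r \<le> q\<close> by (simp add: add_mono le_funD)
      finally show ?thesis .
    qed
    then have "?m (x + y) - q y \<le> ?m x" if "q \<in> C" for q
      using that by (intro greatest) (simp add: algebra_simps)
    then have "?m (x + y) - ?m x \<le> ?m y"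
      by (intro greatest) (simp add: algebra_simps)
    then show "?m (x + y) \<le> ?m x + ?m y" by simp
  next
    show "?m 0 = 0"
      using ne by (simp add: sublinear_zero[OF sub])
  next
    fix c :: real and x
    assume c: "0 < c"
    have "?m (c *\<^sub>R x) / c \<le> ?m x"
    proof (rule greatest)
      fix q assume "q \<in> C"
      then have "?m (c *\<^sub>R x) \<le> c * q x"
        using lower[of q "c *\<^sub>R x"] sublinear_scaleR[OF sub, of q c x] c by simp
      then show "?m (c *\<^sub>R x) / c \<le> q x" using c by (simp add: field_simps)
    qed
    then show "?m (c *\<^sub>R x) \<le> c * ?m x" using c by (simp add: field_simps)
  qed
qed

lemma minimal_sublinear_imp_linear:
  assumes q: "sublinear q" and minimal: "\<And>p. sublinear p \<Longrightarrow> p \<le> q \<Longrightarrow> p = q"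
  shows "linear q"
proof -
  have neg: "q (- x) = - q x" for x
  proof -
    have "inf_along q x = q"
      using minimal sublinear_inf_along[OF q] inf_along_le_self[OF q] by blast
    then have "q (- x) \<le> - q x" using inf_along_neg[OF q, of x] by simp
    then show ?thesis using sublinear_neg_le[OF q, of x] by simp
  qed
  show ?thesis
  proof (rule linearI)
    fix x y
    have "q (- (x + y)) \<le> q (- x) + q (- y)"
      using sublinear_add[OF q, of "- x" "- y"] by (metis minus_add_distrib)
    then have "- q (x + y) \<le> - q x - q y" by (simp only: neg)
    then show "q (x + y) = q x + q y" using sublinear_add[OF q, of x y] by simp
  next
    fix c :: real and x
    show "q (c *\<^sub>R x) = c *\<^sub>R q x"
    proof (cases "0 \<le> c")
      case True then show ?thesis using sublinear_scaleR[OF q] by simp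
    next
      case False
      then have "q (- ((- c) *\<^sub>R x)) = - ((- c) * q x)"
        using neg sublinear_scaleR[OF q, of "- c"] by simp
      then show ?thesis by simp
    qed
  qed
qed

lemma exists_minimal_sublinear_le:
  assumes "sublinear q0"
  shows "\<exists>q. sublinear q \<and> q \<le> q0 \<and> (\<forall>p. sublinear p \<longrightarrow> p \<le> q \<longrightarrow> p = q)"
proof -
  define S where "S = {q. sublinear q \<and> q \<le> q0}"
  have po: "partial_order_on S (relation_of (\<lambda>p q. q \<le> p) S)"
    by (rule partial_order_on_relation_ofI) auto
  have "\<exists>m\<in>S. \<forall>q\<in>C. m \<le> q" if C: "C \<in> Chains (relation_of (\<lambda>p q. q \<le> p) S)" for C
  proof (cases "C = {}")
    case True
    then show ?thesis using assms unfolding S_def by auto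
  next
    case False
    have CS: "C \<subseteq> S" using Chains_relation_of[OF C] .
    have bdd: "bdd_below ((\<lambda>q. q x) ` C)" for x
    proof (rule bdd_belowI2)
      fix q assume "q \<in> C"
      then have "sublinear q" "q \<le> q0" using CS unfolding S_def by auto
      then show "- q0 (- x) \<le> q x" using sublinear_neg_le[of q x] le_funD[of q q0 "- x"] by simp
    qed
    define m where "m x = (INF q\<in>C. q x)" for x
    have m_le: "m \<le> q" if "q \<in> C" for q
      unfolding m_def le_fun_def using cINF_lower[OF bdd that] by blast
    have "sublinear m"
      unfolding m_def using CS C bdd
      by (intro sublinear_INF_chain[OF False]) (auto simp: S_def Chains_def relation_of_def)
    moreover obtain q where "q \<in> C" using False by blast
    ultimately have "m \<in> S"
      using CS m_le unfolding S_def by (auto intro: order_trans)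
    then show ?thesis using m_le by blast
  qed
  then obtain q where "q \<in> S" and "\<And>p. p \<in> S \<Longrightarrow> p \<le> q \<Longrightarrow> p = q"
    using predicate_Zorn[OF po] by metis
  then show ?thesis unfolding S_def by (auto intro: order_trans)
qed

lemma exists_functional_eq_norm:
  fixes u :: "'a::real_normed_vector"
  shows "\<exists>g :: 'a \<Rightarrow>\<^sub>L real. g u = norm u"
proof -
  let ?q0 = "inf_along norm u"
  obtain q where q: "sublinear q" "q \<le> ?q0" and minimal: "\<And>p. sublinear p \<Longrightarrow> p \<le> q \<Longrightarrow> p = q"
    using exists_minimal_sublinear_le[OF sublinear_inf_along[OF sublinear_norm]] by blast
  have "linear q"
    using q(1) minimal by (rule minimal_sublinear_imp_linear)
  have le_norm: "q x \<le> norm x" for x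
    using q(2) inf_along_le_self[OF sublinear_norm] by (metis le_funD order_trans)
  have "\<bar>q x\<bar> \<le> norm x" for x
    using le_norm[of x] le_norm[of "- x"] linear_neg[OF \<open>linear q\<close>, of x] by simp
  then have "bounded_linear q"
    unfolding bounded_linear_def bounded_linear_axioms_def using \<open>linear q\<close>
    by (intro conjI exI[of _ 1]) auto
  moreover have "q u = norm u"
    using le_norm[of u] le_funD[OF q(2), of "- u"] inf_along_neg[OF sublinear_norm, of u]
      linear_neg[OF \<open>linear q\<close>, of u] by simp
  ultimately show ?thesis by (intro exI[of _ "Blinfun q"]) (simp add: bounded_linear_Blinfun_apply)
qed

lemma eq_0_if_functionals_vanish:
  fixes u :: "'a::real_normed_vector"
  assumes "\<And>g :: 'a \<Rightarrow>\<^sub>L real. g u = 0"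
  shows "u = 0"
  using exists_functional_eq_norm[of u] assms by auto

lemma blinfun_apply_id_plus_compose [simp]:
  "blinfun_apply (id_blinfun + (T o\<^sub>L A)) x = x + T (A x)"
  by (simp add: plus_blinfun.rep_eq)

lemma compact_operator_convergent_subseq:
  fixes z :: "nat \<Rightarrow> 'a::real_normed_vector"
  assumes T: "compact_operator T" and z: "bounded (range z)"
  shows "\<exists>r l. strict_mono r \<and> (\<lambda>n. T (z (r n))) \<longlonglongrightarrow> l"
proof -
  obtain K where K: "0 < K" "\<And>n. norm (z n) \<le> K"
    using z unfolding bounded_pos by auto
  have "seq_compact (closure (T ` cball 0 1))"
    using T unfolding compact_operator_def by (rule compact_imp_seq_compact)
  moreover have "\<forall>n. T ((1 / K) *\<^sub>R z n) \<in> closure (T ` cball 0 1)"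
    using K by (intro allI closure_subset[THEN subsetD] imageI) (simp add: field_simps)
  ultimately obtain r l where r: "strict_mono r" and "((\<lambda>n. T ((1 / K) *\<^sub>R z n)) \<circ> r) \<longlonglongrightarrow> l"
    by (rule seq_compactE) blast
  then have l: "(\<lambda>n. T ((1 / K) *\<^sub>R z (r n))) \<longlonglongrightarrow> l"
    by (simp add: comp_def)
  have "(\<lambda>n. K *\<^sub>R T ((1 / K) *\<^sub>R z (r n))) \<longlonglongrightarrow> K *\<^sub>R l"
    by (intro tendsto_scaleR tendsto_const l)
  then have "(\<lambda>n. T (z (r n))) \<longlonglongrightarrow> K *\<^sub>R l"
    using K by (simp add: blinfun.scaleR_right)
  with r show ?thesis by blast
qed

lemma weak_operator_limit_apply:
  fixes A :: "nat \<Rightarrow> 'a::real_normed_vector \<Rightarrow>\<^sub>L 'b::real_normed_vector"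
    and h :: "'b \<Rightarrow>\<^sub>L real"
  assumes wot: "\<And>v (h :: 'b \<Rightarrow>\<^sub>L real). (\<lambda>n. h (A n v)) \<longlonglongrightarrow> h (A0 v)"
    and bound: "\<And>n. norm (A n) \<le> K" and y: "y \<longlonglongrightarrow> y0"
  shows "(\<lambda>n. h (A n (y n))) \<longlonglongrightarrow> h (A0 y0)"
proof -
  have "(\<lambda>n. h (A n (y n - y0))) \<longlonglongrightarrow> 0"
  proof (rule Lim_null_comparison)
    have "norm (h (A n (y n - y0))) \<le> norm h * (K * norm (y n - y0))" for n
    proof -
      have "norm (h (A n (y n - y0))) \<le> norm h * (norm (A n) * norm (y n - y0))"
        by (meson norm_blinfun norm_ge_zero mult_left_mono order_trans)
      also have "\<dots> \<le> norm h * (K * norm (y n - y0))"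
        by (intro mult_left_mono mult_right_mono bound) auto
      finally show ?thesis .
    qed
    then show "\<forall>\<^sub>F n in sequentially. norm (h (A n (y n - y0))) \<le> norm h * (K * norm (y n - y0))"
      by simp
    have "(\<lambda>n. norm (y n - y0)) \<longlonglongrightarrow> 0"
      using y by (simp add: LIM_zero_iff tendsto_norm_zero_iff)
    then show "(\<lambda>n. norm h * (K * norm (y n - y0))) \<longlonglongrightarrow> 0"
      by (metis mult_zero_right tendsto_mult_left)
  qed
  then have "(\<lambda>n. h (A n y0) + h (A n (y n - y0))) \<longlonglongrightarrow> h (A0 y0) + 0"
    by (intro tendsto_add wot)
  then show ?thesis by (simp add: blinfun.diff_right)
qed

lemma approximate_kernel_imp_kernel:
  fixes \<A> :: "('v::real_normed_vector \<Rightarrow>\<^sub>L 'w::real_normed_vector) set"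
    and T :: "'w \<Rightarrow>\<^sub>L 'v" and A :: "nat \<Rightarrow> 'v \<Rightarrow>\<^sub>L 'w" and x :: "nat \<Rightarrow> 'v"
  assumes "bounded \<A>" and T: "compact_operator T" and wot: "wot_seq_compact \<A>"
    and A: "\<And>n. A n \<in> \<A>" and x: "\<And>n. norm (x n) = 1"
    and approx: "(\<lambda>n. x n + T (A n (x n))) \<longlonglongrightarrow> 0"
  shows "\<exists>A0\<in>\<A>. \<exists>w. norm w = 1 \<and> w + T (A0 w) = 0"
proof -
  obtain K where K: "\<And>n. norm (A n) \<le> K"
    using \<open>bounded \<A>\<close> A unfolding bounded_iff by blast
  have "norm (A n (x n)) \<le> K" for n
    using norm_blinfun[of "A n" "x n"] K[of n] x[of n] by simp
  then have "bounded (range (\<lambda>n. A n (x n)))"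
    unfolding bounded_iff by blast
  then obtain r1 l where r1: "strict_mono r1" and l: "(\<lambda>n. T (A (r1 n) (x (r1 n)))) \<longlonglongrightarrow> l"
    using compact_operator_convergent_subseq[OF T] by blast
  have "\<exists>r2 A0. strict_mono r2 \<and> A0 \<in> \<A> \<and>
      (\<forall>v (h :: 'w \<Rightarrow>\<^sub>L real). (\<lambda>n. h (A (r1 (r2 n)) v)) \<longlonglongrightarrow> h (A0 v))"
    using wot A unfolding wot_seq_compact_def by (elim allE[of _ "\<lambda>n. A (r1 n)"]) auto
  then obtain r2 A0 where r2: "strict_mono r2" and "A0 \<in> \<A>"
    and A0: "\<And>v (h :: 'w \<Rightarrow>\<^sub>L real). (\<lambda>n. h (A (r1 (r2 n)) v)) \<longlonglongrightarrow> h (A0 v)"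
    by blast
  define s where "s = r1 \<circ> r2"
  define w where "w = - l"
  have Tw: "(\<lambda>n. T (A (s n) (x (s n)))) \<longlonglongrightarrow> - w"
    using LIMSEQ_subseq_LIMSEQ[OF l r2] unfolding s_def w_def comp_def by simp
  have "(\<lambda>n. x (s n) + T (A (s n) (x (s n)))) \<longlonglongrightarrow> 0"
    using LIMSEQ_subseq_LIMSEQ[OF approx strict_mono_o[OF r1 r2]] unfolding s_def comp_def .
  from tendsto_diff[OF this Tw] have xw: "(\<lambda>n. x (s n)) \<longlonglongrightarrow> w" by simp
  have "norm w = 1"
    using tendsto_norm[OF xw] x by (simp add: LIMSEQ_const_iff)
  have "g (w + T (A0 w)) = 0" for g :: "'v \<Rightarrow>\<^sub>L real"
  proof -
    have "(\<lambda>n. (g o\<^sub>L T) (A (s n) (x (s n)))) \<longlonglongrightarrow> (g o\<^sub>L T) (A0 w)"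
      by (rule weak_operator_limit_apply[where A = "\<lambda>n. A (s n)", OF _ _ xw])
        (use A0 K in \<open>simp_all add: s_def\<close>)
    moreover have "(\<lambda>n. g (T (A (s n) (x (s n))))) \<longlonglongrightarrow> g (- w)"
      using Tw by (rule bounded_linear.tendsto[OF blinfun.bounded_linear_right])
    ultimately have "g (T (A0 w)) = g (- w)"
      using LIMSEQ_unique by fastforce
    then show ?thesis by (simp add: blinfun.add_right blinfun.minus_right)
  qed
  then have "w + T (A0 w) = 0"
    by (rule eq_0_if_functionals_vanish)
  with \<open>A0 \<in> \<A>\<close> \<open>norm w = 1\<close> show ?thesis by blast
qed

lemma not_bounded_below_imp_small_unit_vector:
  fixes B :: "'a::real_normed_vector \<Rightarrow>\<^sub>L 'b::real_normed_vector"
  assumes "\<not> (\<forall>x. \<epsilon> * norm x \<le> norm (B x))"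
  shows "\<exists>u. norm u = 1 \<and> norm (B u) < \<epsilon>"
proof -
  obtain x where small: "norm (B x) < \<epsilon> * norm x"
    using assms by (auto simp: not_le)
  then have "x \<noteq> 0"
    by (cases "x = 0") simp_all
  have "norm (B (x /\<^sub>R norm x)) = norm (B x) / norm x"
    by (simp add: blinfun.scaleR_right divide_inverse_commute)
  also have "\<dots> < \<epsilon>"
    using small \<open>x \<noteq> 0\<close> by (simp add: divide_less_eq)
  finally show ?thesis
    using \<open>x \<noteq> 0\<close> by (intro exI[of _ "x /\<^sub>R norm x"]) simp
qed

lemma compact_perturbation_bounded_below:
  fixes \<A> :: "('v::real_normed_vector \<Rightarrow>\<^sub>L 'w::real_normed_vector) set"
    and T :: "'w \<Rightarrow>\<^sub>L 'v"
  assumes "bounded \<A>" and "compact_operator T" and "wot_seq_compact \<A>"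
    and inj: "\<And>A. A \<in> \<A> \<Longrightarrow> inj (\<lambda>x. x + T (A x))"
  shows "\<exists>\<epsilon>>0. \<forall>A\<in>\<A>. \<forall>x. \<epsilon> * norm x \<le> norm (x + T (A x))"
proof (rule ccontr)
  assume not_below: "\<not> ?thesis"
  have "\<exists>A\<in>\<A>. \<exists>u. norm u = 1 \<and> norm (u + T (A u)) < inverse (real (Suc n))" for n
  proof -
    have "0 < inverse (real (Suc n))" by simp
    then have "\<not> (\<forall>A\<in>\<A>. \<forall>x. inverse (real (Suc n)) * norm x \<le> norm (x + T (A x)))"
      using not_below by blast
    then obtain A where "A \<in> \<A>"
      and "\<not> (\<forall>x. inverse (real (Suc n)) * norm x \<le> norm ((id_blinfun + (T o\<^sub>L A)) x))"
      by auto
    with not_bounded_below_imp_small_unit_vector show ?thesis by fastforce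
  qed
  then obtain A u where A: "\<And>n. A n \<in> \<A>" and u: "\<And>n. norm (u n) = 1"
    and small: "\<And>n. norm (u n + T (A n (u n))) < inverse (real (Suc n))"
    by metis
  have approx: "(\<lambda>n. u n + T (A n (u n))) \<longlonglongrightarrow> 0"
  proof (rule Lim_null_comparison)
    show "\<forall>\<^sub>F n in sequentially. norm (u n + T (A n (u n))) \<le> inverse (real (Suc n))"
      using small by (simp add: less_imp_le)
  qed (rule LIMSEQ_inverse_real_of_nat)
  obtain A0 w where "A0 \<in> \<A>" "norm w = 1" "w + T (A0 w) = 0"
    using approximate_kernel_imp_kernel[OF assms(1-3) A u approx] by blast
  moreover have "w = 0" if "w + T (A0 w) = 0"
    using injD[OF inj[OF \<open>A0 \<in> \<A>\<close>], of w 0] that by simp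
  ultimately show False by simp
qed

lemma norm_right_inverse_le:
  fixes B :: "'a::real_normed_vector \<Rightarrow>\<^sub>L 'b::real_normed_vector"
  assumes BC: "B o\<^sub>L C = id_blinfun" and "0 < \<epsilon>" and below: "\<And>x. \<epsilon> * norm x \<le> norm (B x)"
  shows "norm C \<le> 1 / \<epsilon>"
proof (rule norm_blinfun_bound)
  show "0 \<le> 1 / \<epsilon>" using \<open>0 < \<epsilon>\<close> by simp
  fix v
  have "\<epsilon> * norm (C v) \<le> norm v"
    using below[of "C v"] blinfun_apply_blinfun_compose[of B C v] BC by simp
  then show "norm (C v) \<le> 1 / \<epsilon> * norm v"
    using \<open>0 < \<epsilon>\<close> by (simp add: field_simps)
qed

lemma banach_const_ge_right_inverse:
  fixes B :: "'a::real_normed_vector \<Rightarrow>\<^sub>L 'a"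
  assumes BC: "B o\<^sub>L C = id_blinfun" and "0 < \<kappa>" and "norm C \<le> 1 / \<kappa>"
  shows "ereal \<kappa> \<le> banach_const B"
proof -
  have B_C: "B (C v) = v" for v
    using blinfun_apply_blinfun_compose[of B C v] BC by simp
  have "cball 0 \<kappa> \<subseteq> B ` cball 0 1"
  proof
    fix v :: 'a assume "v \<in> cball 0 \<kappa>"
    have "norm (C v) \<le> norm C * norm v" by (rule norm_blinfun)
    also have "\<dots> \<le> 1 / \<kappa> * \<kappa>"
      using \<open>norm C \<le> 1 / \<kappa>\<close> \<open>v \<in> cball 0 \<kappa>\<close> \<open>0 < \<kappa>\<close> by (intro mult_mono) auto
    finally have "C v \<in> cball 0 1" using \<open>0 < \<kappa>\<close> by simp
    then show "v \<in> B ` cball 0 1" using B_C[symmetric] by (rule rev_image_eqI)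
  qed
  then have "ereal \<kappa> \<le> Sup (ereal ` {\<kappa>. 0 < \<kappa> \<and> cball 0 \<kappa> \<subseteq> B ` cball 0 1})"
    using \<open>0 < \<kappa>\<close> by (intro Sup_upper imageI) simp
  moreover have "surj B" using B_C by (rule surjI)
  ultimately show ?thesis unfolding banach_const_def by simp
qed

theorem mainTheorem8:
  fixes \<A> :: "('v::banach \<Rightarrow>\<^sub>L 'w::banach) set"
    and T :: "'w \<Rightarrow>\<^sub>L 'v"
  assumes "bounded \<A>"
    and "compact_operator T"
    and "\<forall>A\<in>\<A>. is_isomorphism (id_blinfun + (T o\<^sub>L A))"
    and "wot_seq_compact \<A>"
  shows "(\<exists>M::real. \<forall>A\<in>\<A>. \<forall>C. C o\<^sub>L (id_blinfun + (T o\<^sub>L A)) = id_blinfun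
             \<and> (id_blinfun + (T o\<^sub>L A)) o\<^sub>L C = id_blinfun \<longrightarrow> norm C \<le> M)
       \<and> (\<exists>\<kappa>::real. \<kappa> > 0 \<and> (\<forall>A\<in>\<A>. ereal \<kappa> \<le> banach_const (id_blinfun + (T o\<^sub>L A))))"
proof -
  have "inj (\<lambda>x. x + T (A x))" if A: "A \<in> \<A>" for A
  proof -
    obtain C where CB: "C o\<^sub>L (id_blinfun + (T o\<^sub>L A)) = id_blinfun"
      using assms(3) A unfolding is_isomorphism_def by blast
    have left_inverse: "C (x + T (A x)) = x" for x
      using blinfun_apply_blinfun_compose[of C "id_blinfun + (T o\<^sub>L A)" x] CB by simp
    show ?thesis by (rule injI) (metis left_inverse)
  qed
  from compact_perturbation_bounded_below[OF assms(1,2,4) this]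
  obtain \<epsilon> where "0 < \<epsilon>" and below: "\<forall>A\<in>\<A>. \<forall>x. \<epsilon> * norm x \<le> norm (x + T (A x))"
    by blast
  have norm_inverse: "norm C \<le> 1 / \<epsilon>"
    if A: "A \<in> \<A>" and BC: "(id_blinfun + (T o\<^sub>L A)) o\<^sub>L C = id_blinfun" for A C
    using norm_right_inverse_le[OF BC \<open>0 < \<epsilon>\<close>] below A by simp
  have "ereal \<epsilon> \<le> banach_const (id_blinfun + (T o\<^sub>L A))" if A: "A \<in> \<A>" for A
  proof -
    obtain C where BC: "(id_blinfun + (T o\<^sub>L A)) o\<^sub>L C = id_blinfun"
      using assms(3) A unfolding is_isomorphism_def by blast
    show ?thesis
      using banach_const_ge_right_inverse[OF BC \<open>0 < \<epsilon>\<close> norm_inverse[OF A BC]] .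
  qed
  then show ?thesis
    using norm_inverse \<open>0 < \<epsilon>\<close> by blast
qed

end
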